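(* Let $\mathbb{F}\in\{\mathbb{R},\mathbb{C}\}$, $p\in(0,1]$, let $k\in\{1,\dots,n\}$ be an integer, and let $r>0$ be a real number. Suppose $\boldsymbol A\in\mathbb{F}^{m\times n}$ satisfies the phaseless bi-Lipschitz condition on the set $\mathcal X=\{\boldsymbol x\in\mathbb{F}^n:\|\boldsymbol x\|_0\le (r+4)k\}$ with positive constants $L,U$, and that \[ L-U\cdot 2^{1/p-1}\cdot\Big(\frac{2}{r}\Big)^{1/p-1/2}>0 . \] Then there are positive constants $C_1,C_2,D_1,D_2$ depending only on $U,L,r,p$ such that for every $\boldsymbol x\in\mathbb{F}^n$, every $\eta\ge0$ and every $\boldsymbol e\in\mathbb{R}^m$ with $\|\boldsymbol e\|_2\le\eta$, any $\boldsymbol x^\#\in\Delta_{p,\eta}(|\boldsymbol A\boldsymbol x|+\boldsymbol e)$ satisfies \[ \mathrm{dist}_p(\boldsymbol x^\#,\boldsymbol x)\le C_1\,\sigma_k(\boldsymbol x)_p+D_1\,k^{1/p-1/2}\,\eta, \qquad \mathrm{dist}(\boldsymbol x^\#,\boldsymbol x)\le C_2\,\frac{\sigma_k(\boldsymbol x)_p}{k^{1/p-1/2}}+D_2\,\eta . \] Explicitly, with $\widetilde C_2=\dfrac{U\,(2^{1/p-1}r^{-(1/p-1/2)}+1)}{L-U2^{1/p-1}(2/r)^{1/p-1/2}}$, $\widetilde D_2=\dfrac{2}{L-U2^{1/p-1}(2/r)^{1/p-1/2}}$, $\widetilde C_1=(2+r)^{1-p/2}\widetilde C_2^{\,p}$,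 $\widetilde D_1=(2+r)^{1-p/2}\widetilde D_2^{\,p}$, one may take $C_1=2^{1/p-1}(2\widetilde C_1+2)^{1/p}$, $D_1=2^{1/p-1}\widetilde D_1^{1/p}$, $C_2=\big(1+2^{1/p-1}(r/2)^{-(1/p-1/2)}\big)\widetilde C_2+2^{1/p-1}r^{-(1/p-1/2)}+1$, $D_2=\big(1+2^{1/p-1}(r/2)^{-(1/p-1/2)}\big)\widetilde D_2$.
   Context: $\mathbb{F}\in\{\mathbb{R},\mathbb{C}\}$. For $q>0$, $\|\boldsymbol u\|_q=(\sum_i|u_i|^q)^{1/q}$ (a quasi-norm if $q<1$); $\|\boldsymbol u\|_0$ is the number of nonzero entries; $|\boldsymbol u|$ is the vector of entrywise moduli. For $\boldsymbol x,\boldsymbol y\in\mathbb{F}^n$ and $q>0$, $\mathrm{dist}_q(\boldsymbol x,\boldsymbol y)=\min_{c\in\mathbb{F},|c|=1}\|\boldsymbol x-c\boldsymbol y\|_q$ and $\mathrm{dist}=\mathrm{dist}_2$. $\Sigma_k=\{\boldsymbol z\in\mathbb{F}^n:\|\boldsymbol z\|_0\le k\}$ and $\sigma_k(\boldsymbol x)_q=\min_{\boldsymbol z\in\Sigma_k}\mathrm{dist}_q(\boldsymbol x,\boldsymbol z)$. A matrix $\boldsymbol A\in\mathbb{F}^{m\times n}$ satisfies the phaseless bi-Lipschitz condition on $\mathcal X\subset\mathbb{F}^n$ with positive constants $L,U$ if $L\,\mathrm{dist}(\boldsymbol x,\boldsymbol y)\le\||\boldsymbol A\boldsymbol x|-|\boldsymbol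 A\boldsymbol y|\|_2\le U\,\mathrm{dist}(\boldsymbol x,\boldsymbol y)$ for all $\boldsymbol x,\boldsymbol y\in\mathcal X$. For $p\in(0,1]$, $\eta\ge0$ and $\boldsymbol y\in\mathbb{R}^m$, the phaseless $\ell_p$-minimization decoder is $\Delta_{p,\eta}(\boldsymbol y)=\operatorname{argmin}_{\boldsymbol z\in\mathbb{F}^n}\{\|\boldsymbol z\|_p:\||\boldsymbol A\boldsymbol z|-\boldsymbol y\|_2\le\eta\}$ (the set of minimizers). *)

theory Defs
  imports "HOL-Analysis.Analysis"
begin

text \<open>Vectors in F^n are modelled as 'a^'n with 'a a real normed field
  (instantiated to real and complex in the main theorem); matrices as 'a^'n^'m.\<close>

definition lp_norm :: "real \<Rightarrow> 'a::real_normed_field ^ 'n \<Rightarrow> real" where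
  "lp_norm q u = (\<Sum>i\<in>UNIV. norm (u $ i) powr q) powr (1 / q)"

definition l0_norm :: "'a::zero ^ 'n \<Rightarrow> nat" where
  "l0_norm u = card {i. u $ i \<noteq> 0}"

definition absvec :: "'a::real_normed_field ^ 'n \<Rightarrow> real ^ 'n" where
  "absvec u = (\<chi> i. norm (u $ i))"

definition dist_q :: "real \<Rightarrow> 'a::real_normed_field ^ 'n \<Rightarrow> 'a ^ 'n \<Rightarrow> real" where
  "dist_q q x y = (INF c\<in>{c::'a. norm c = 1}. lp_norm q (x - (\<chi> i. c * y $ i)))"

abbreviation dist2 :: "'a::real_normed_field ^ 'n \<Rightarrow> 'a ^ 'n \<Rightarrow> real" where
  "dist2 x y \<equiv> dist_q 2 x y"

definition sparse_set :: "real \<Rightarrow> ('a::zero ^ 'n) set" where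
  "sparse_set s = {z. real (l0_norm z) \<le> s}"

definition sigma_k :: "nat \<Rightarrow> real \<Rightarrow> 'a::real_normed_field ^ 'n \<Rightarrow> real" where
  "sigma_k k q x = (INF z\<in>sparse_set (real k). dist_q q x z)"

definition phaseless_bilip ::
  "'a::real_normed_field ^ 'n ^ 'm \<Rightarrow> ('a ^ 'n) set \<Rightarrow> real \<Rightarrow> real \<Rightarrow> bool" where
  "phaseless_bilip A X L U \<longleftrightarrow> 0 < L \<and> 0 < U \<and>
     (\<forall>x\<in>X. \<forall>y\<in>X. L * dist2 x y \<le> norm (absvec (A *v x) - absvec (A *v y))
                  \<and> norm (absvec (A *v x) - absvec (A *v y)) \<le> U * dist2 x y)"

text \<open>Phaseless l_p decoder: the set of minimizers (norm on real^'m is the Euclidean 2-norm).\<close>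
definition Delta :: "'a::real_normed_field ^ 'n ^ 'm \<Rightarrow> real \<Rightarrow> real \<Rightarrow> real ^ 'm \<Rightarrow> ('a ^ 'n) set" where
  "Delta A p eta y = {z. norm (absvec (A *v z) - y) \<le> eta \<and>
      (\<forall>w. norm (absvec (A *v w) - y) \<le> eta \<longrightarrow> lp_norm p z \<le> lp_norm p w)}"

definition den :: "real \<Rightarrow> real \<Rightarrow> real \<Rightarrow> real \<Rightarrow> real" where
  "den L U r p = L - U * 2 powr (1/p - 1) * (2 / r) powr (1/p - 1/2)"

definition Ct2 :: "real \<Rightarrow> real \<Rightarrow> real \<Rightarrow> real \<Rightarrow> real" where
  "Ct2 L U r p = U * (2 powr (1/p - 1) * r powr (-(1/p - 1/2)) + 1) / den L U r p"

definition Dt2 :: "real \<Rightarrow> real \<Rightarrow> real \<Rightarrow> real \<Rightarrow> real" where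
  "Dt2 L U r p = 2 / den L U r p"

definition Ct1 :: "real \<Rightarrow> real \<Rightarrow> real \<Rightarrow> real \<Rightarrow> real" where
  "Ct1 L U r p = (2 + r) powr (1 - p/2) * Ct2 L U r p powr p"

definition Dt1 :: "real \<Rightarrow> real \<Rightarrow> real \<Rightarrow> real \<Rightarrow> real" where
  "Dt1 L U r p = (2 + r) powr (1 - p/2) * Dt2 L U r p powr p"

definition C1 :: "real \<Rightarrow> real \<Rightarrow> real \<Rightarrow> real \<Rightarrow> real" where
  "C1 L U r p = 2 powr (1/p - 1) * (2 * Ct1 L U r p + 2) powr (1/p)"

definition D1 :: "real \<Rightarrow> real \<Rightarrow> real \<Rightarrow> real \<Rightarrow> real" where
  "D1 L U r p = 2 powr (1/p - 1) * Dt1 L U r p powr (1/p)"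

definition C2 :: "real \<Rightarrow> real \<Rightarrow> real \<Rightarrow> real \<Rightarrow> real" where
  "C2 L U r p = (1 + 2 powr (1/p - 1) * (r/2) powr (-(1/p - 1/2))) * Ct2 L U r p
                + 2 powr (1/p - 1) * r powr (-(1/p - 1/2)) + 1"

definition D2 :: "real \<Rightarrow> real \<Rightarrow> real \<Rightarrow> real \<Rightarrow> real" where
  "D2 L U r p = (1 + 2 powr (1/p - 1) * (r/2) powr (-(1/p - 1/2))) * Dt2 L U r p"

end

theory Submission
  imports Defs
begin

text \<open>Let \<open>S\<close> carry the \<open>k\<close> largest entries of \<open>x\<close>. Peeling the entries of the minimiser \<open>x\<^sup>#\<close>
  (resp. of \<open>x\<close>) outside \<open>S\<close> off greedily in blocks of about \<open>r k/2\<close> (resp. \<open>r k\<close>) entries, each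
  block is controlled in \<open>\<ell>\<^sub>2\<close> by the \<open>\<ell>\<^sub>p\<close>-mass of the previous one. This yields \<open>(r+4)k\<close>-sparse
  vectors \<open>u\<close>, \<open>v\<close> agreeing with \<open>x\<^sup>#\<close>, \<open>x\<close> on \<open>S\<close> whose errors, also after applying \<open>A\<close>, are of
  order \<open>k\<^bsup>1/2 - 1/p\<^esup>\<close> times the \<open>\<ell>\<^sub>p\<close>-mass of the tails. The lower bi-Lipschitz bound controls
  \<open>D = dist(u, v)\<close> by these errors and the noise, while the minimality of \<open>x\<^sup>#\<close> bounds its tail by
  \<open>k\<^bsup>1/p - 1/2\<^esup> D\<close> and \<open>\<sigma>\<^sub>k(x)\<^sub>p\<close> (the cone constraint). The hypothesis on \<open>L\<close>, \<open>U\<close>, \<open>r\<close> makes the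
  resulting inequality for \<open>D\<close> solvable, and both error estimates then follow from the triangle
  inequality (for \<open>dist\<^sub>p\<close> in its \<open>p\<close>-th power form).\<close>

section \<open>Inequalities for real powers\<close>

lemma powr_add_le_add_powr:
  fixes a b p :: real
  assumes "0 < p" "p \<le> 1" "0 \<le> a" "0 \<le> b"
  shows "(a + b) powr p \<le> a powr p + b powr p"
proof (cases "a + b = 0")
  case True
  then show ?thesis using assms by simp
next
  case False
  then have ab: "0 < a + b" using assms by linarith
  have frac: "c / (a + b) \<le> (c / (a + b)) powr p" if "0 \<le> c" "c \<le> a + b" for c
  proof -
    have "(c / (a + b)) powr 1 \<le> (c / (a + b)) powr p"
      using assms ab that by (intro powr_mono') auto
    then show ?thesis using ab that by simp
  qed
  have "1 = a / (a + b) + b / (a + b)" using ab by (simp add: add_divide_distrib[symmetric])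
  also have "\<dots> \<le> (a / (a + b)) powr p + (b / (a + b)) powr p"
    using assms by (intro add_mono frac) auto
  also have "\<dots> = (a powr p + b powr p) / (a + b) powr p"
    using assms by (simp add: powr_divide add_divide_distrib)
  finally show ?thesis using ab by (simp add: le_divide_eq)
qed

lemma add_powr_le_powr_add:
  fixes a b q :: real
  assumes "1 \<le> q" "0 \<le> a" "0 \<le> b"
  shows "a powr q + b powr q \<le> (a + b) powr q"
proof -
  have "(a powr q + b powr q) powr (1/q) \<le> (a powr q) powr (1/q) + (b powr q) powr (1/q)"
    using assms by (intro powr_add_le_add_powr) auto
  also have "\<dots> = a + b" using assms by (simp add: powr_powr)
  finally have "((a powr q + b powr q) powr (1/q)) powr q \<le> (a + b) powr q"
    using assms by (intro powr_mono2) auto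
  then show ?thesis using assms by (simp add: powr_powr)
qed

text \<open>Each term lies below the tangent line of the concave \<open>t \<mapsto> t powr q\<close> at the mean.\<close>
lemma sum_powr_le_card_powr:
  fixes z :: "'i \<Rightarrow> real" and q :: real
  assumes "0 < q" "q \<le> 1" "\<And>i. i \<in> S \<Longrightarrow> 0 \<le> z i"
  shows "(\<Sum>i\<in>S. z i powr q) \<le> real (card S) powr (1 - q) * (\<Sum>i\<in>S. z i) powr q"
proof (cases "(\<Sum>i\<in>S. z i) = 0")
  case True
  then have "\<forall>i\<in>S. z i = 0" if "finite S"
    using that sum_nonneg_eq_0_iff assms by blast
  then show ?thesis using assms by (cases "finite S") auto
next
  case False
  define Z where "Z = (\<Sum>i\<in>S. z i)"
  define n where "n = real (card S)"
  define m where "m = Z / n"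
  have "finite S" "S \<noteq> {}" using False by (auto intro: ccontr)
  then have n_pos: "0 < n" unfolding n_def by (simp add: card_gt_0_iff)
  have "0 < Z" using False assms unfolding Z_def by (metis order_le_less sum_nonneg)
  then have m_pos: "0 < m" using n_pos unfolding m_def by simp
  have tangent: "z i powr q \<le> m powr q * (q * (z i / m) + (1 - q))" if "i \<in> S" for i
  proof -
    have "(z i / m) powr q \<le> q * (z i / m) + (1 - q)"
    proof (cases "z i = 0")
      case False
      then have "0 < z i / m" using assms(3)[OF that] m_pos by simp
      then show ?thesis using Youngs_inequality_0[of q "1 - q" "z i / m" 1] assms by simp
    qed (use assms in simp)
    then show ?thesis
      using m_pos assms(3)[OF that] by (simp add: powr_divide divide_le_eq mult.commute)
  qed
  have "(\<Sum>i\<in>S. z i powr q) \<le> (\<Sum>i\<in>S. m powr q * (q * (z i / m) + (1 - q)))"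
    using tangent by (intro sum_mono) auto
  also have "\<dots> = m powr q * (q * (Z / m) + (1 - q) * n)"
    unfolding Z_def n_def
    by (simp add: sum.distrib distrib_left sum_distrib_left[symmetric] sum_divide_distrib[symmetric] mult.assoc)
  also have "\<dots> = n * m powr q" using n_pos m_pos unfolding m_def by (simp add: field_simps)
  also have "\<dots> = n powr (1 - q) * Z powr q"
    using n_pos m_pos unfolding m_def by (simp add: powr_divide powr_diff field_simps)
  finally show ?thesis unfolding n_def Z_def .
qed

lemma powr_add_le_two_powr:
  fixes x y q :: real
  assumes "1 \<le> q" "0 \<le> x" "0 \<le> y"
  shows "(x + y) powr q \<le> 2 powr (q - 1) * (x powr q + y powr q)"
proof -
  have "x + y = (\<Sum>b\<in>UNIV. (if b then x powr q else y powr q) powr (1/q))"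
    using assms by (simp add: UNIV_bool powr_powr)
  also have "\<dots> \<le> 2 powr (1 - 1/q) * (x powr q + y powr q) powr (1/q)"
    using sum_powr_le_card_powr[of "1/q" UNIV "\<lambda>b. if b then x powr q else y powr q"] assms
    by (simp add: UNIV_bool add.commute)
  finally have "(x + y) powr q \<le> (2 powr (1 - 1/q) * (x powr q + y powr q) powr (1/q)) powr q"
    using assms by (intro powr_mono2) auto
  also have "\<dots> = 2 powr (q - 1) * (x powr q + y powr q)"
  proof -
    have "(1 - 1/q) * q = q - 1" using assms by (simp add: field_simps)
    then show ?thesis using assms by (simp add: powr_mult powr_powr)
  qed
  finally show ?thesis .
qed

section \<open>Restrictions and \<open>\<ell>\<^sub>p\<close>-sums of vectors\<close>

definition vec_restrict :: "'n set \<Rightarrow> 'a::zero ^ 'n \<Rightarrow> 'a ^ 'n" where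
  "vec_restrict T v = (\<chi> i. if i \<in> T then v $ i else 0)"

definition lp_sum :: "real \<Rightarrow> 'a::real_normed_field ^ 'n \<Rightarrow> 'n set \<Rightarrow> real" where
  "lp_sum p v T = (\<Sum>i\<in>T. norm (v $ i) powr p)"

lemma vec_restrict_nth [simp]: "vec_restrict T v $ i = (if i \<in> T then v $ i else 0)"
  unfolding vec_restrict_def by simp

lemma vec_restrict_UNIV [simp]: "vec_restrict UNIV v = v"
  by (simp add: vec_eq_iff)

lemma vec_restrict_Un:
  "A \<inter> B = {} \<Longrightarrow> vec_restrict (A \<union> B) v = vec_restrict A v + vec_restrict B (v :: 'a::monoid_add ^ 'n)"
  by (auto simp: vec_eq_iff)

lemma diff_vec_restrict: "v - vec_restrict T v = vec_restrict (- T) (v :: 'a::ab_group_add ^ 'n)"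
  by (auto simp: vec_eq_iff)

lemma l0_norm_vec_restrict_le: "l0_norm (vec_restrict T v) \<le> card T"
  unfolding l0_norm_def by (rule card_mono) auto

lemma norm_vec_restrict_power2:
  "(norm (vec_restrict T (v :: 'a::real_normed_vector ^ 'n)))\<^sup>2 = (\<Sum>i\<in>T. (norm (v $ i))\<^sup>2)"
proof -
  have "(\<Sum>i\<in>UNIV. (norm (vec_restrict T v $ i))\<^sup>2) = (\<Sum>i\<in>UNIV. if i \<in> T then (norm (v $ i))\<^sup>2 else 0)"
    by (rule sum.cong) auto
  then show ?thesis
    by (simp add: norm_vec_def L2_set_def sum_nonneg sum.If_cases)
qed

lemma norm_vec_restrict_le:
  fixes v :: "'a::real_normed_vector ^ 'n"
  assumes "0 \<le> M" "\<And>i. i \<in> T \<Longrightarrow> norm (v $ i) \<le> M"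
  shows "norm (vec_restrict T v) \<le> sqrt (real (card T)) * M"
proof -
  have "(norm (vec_restrict T v))\<^sup>2 \<le> (\<Sum>i\<in>T. M\<^sup>2)"
    unfolding norm_vec_restrict_power2 by (rule sum_mono) (simp add: assms power_mono)
  also have "\<dots> = (sqrt (real (card T)) * M)\<^sup>2" by (simp add: power_mult_distrib)
  finally show ?thesis by (rule power2_le_imp_le) (simp add: assms(1))
qed

lemma lp_sum_nonneg: "0 \<le> lp_sum p v T"
  unfolding lp_sum_def by (simp add: sum_nonneg)

lemma lp_sum_Un_disjoint: "A \<inter> B = {} \<Longrightarrow> lp_sum p v (A \<union> B) = lp_sum p v A + lp_sum p v B"
  unfolding lp_sum_def by (simp add: sum.union_disjoint)

lemma lp_sum_UNIV_split: "lp_sum p v UNIV = lp_sum p v T + lp_sum p v (- T)"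
  using lp_sum_Un_disjoint[of T "- T" p v] by (simp add: Compl_partition)

lemma lp_sum_diff_le:
  assumes "0 < p" "p \<le> 1"
  shows "lp_sum p (v - w) T \<le> lp_sum p v T + lp_sum p w T"
proof -
  have "norm ((v - w) $ i) powr p \<le> norm (v $ i) powr p + norm (w $ i) powr p" for i
  proof -
    have "norm ((v - w) $ i) powr p \<le> (norm (v $ i) + norm (w $ i)) powr p"
      using assms by (intro powr_mono2) (auto simp: norm_triangle_ineq4)
    also have "\<dots> \<le> norm (v $ i) powr p + norm (w $ i) powr p"
      using assms by (intro powr_add_le_add_powr) auto
    finally show ?thesis .
  qed
  then show ?thesis unfolding lp_sum_def by (simp add: sum.distrib[symmetric] sum_mono)
qed

lemma lp_sum_scale: "norm c = 1 \<Longrightarrow> lp_sum p (c *s v) T = lp_sum p v T"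
  unfolding lp_sum_def by (simp add: norm_mult)

lemma lp_sum_le_card_powr_norm:
  assumes "0 < p" "p \<le> 2" "\<And>i. i \<in> T \<Longrightarrow> v $ i = y $ i"
  shows "lp_sum p v T \<le> (real (card T) powr (1/p - 1/2) * norm y) powr p"
proof -
  have square: "(t\<^sup>2) powr (p/2) = t powr p" if "0 \<le> t" for t :: real
  proof -
    have "t\<^sup>2 = t powr 2" using that by (cases "t = 0") (simp_all add: powr_realpow)
    then show ?thesis by (simp add: powr_powr)
  qed
  have "lp_sum p v T = (\<Sum>i\<in>T. ((norm (y $ i))\<^sup>2) powr (p/2))"
    unfolding lp_sum_def using assms(3) by (simp add: square)
  also have "\<dots> \<le> real (card T) powr (1 - p/2) * (\<Sum>i\<in>T. (norm (y $ i))\<^sup>2) powr (p/2)"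
    using assms by (intro sum_powr_le_card_powr) auto
  also have "\<dots> \<le> real (card T) powr (1 - p/2) * ((norm y)\<^sup>2) powr (p/2)"
  proof -
    have "(\<Sum>i\<in>T. (norm (y $ i))\<^sup>2) \<le> (\<Sum>i\<in>UNIV. (norm (y $ i))\<^sup>2)"
      by (rule sum_mono2) auto
    also have "\<dots> = (norm y)\<^sup>2" using norm_vec_restrict_power2[of UNIV y] by simp
    finally show ?thesis using assms(1) by (intro mult_left_mono powr_mono2) (auto simp: sum_nonneg)
  qed
  also have "\<dots> = (real (card T) powr (1/p - 1/2) * norm y) powr p"
  proof -
    have "(1/p - 1/2) * p = 1 - p/2" using assms(1) by (simp add: field_simps)
    then show ?thesis by (simp add: square powr_mult powr_powr)
  qed
  finally show ?thesis .
qed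

lemma norm_scale_unit: "norm c = 1 \<Longrightarrow> norm (c *s v) = norm (v :: 'a::real_normed_field ^ 'n)"
  by (simp add: norm_vec_def norm_mult)

lemma lp_norm_eq_lp_sum: "lp_norm p v = lp_sum p v UNIV powr (1/p)"
  unfolding lp_norm_def lp_sum_def by simp

lemma lp_norm_2_eq_norm: "lp_norm 2 v = norm v"
  unfolding lp_norm_def norm_vec_def L2_set_def
  by (simp add: powr_half_sqrt[symmetric] sum_nonneg)

section \<open>Phase-invariant distances\<close>

lemma dist_q_le: "norm c = 1 \<Longrightarrow> dist_q q x y \<le> lp_norm q (x - c *s y)"
  unfolding dist_q_def vector_scalar_mult_def
  by (rule cINF_lower) (auto intro!: bdd_belowI2[where m=0] simp: lp_norm_def)

lemma dist_q_ge: "(\<And>c. norm c = 1 \<Longrightarrow> b \<le> lp_norm q (x - c *s y)) \<Longrightarrow> b \<le> dist_q q x y"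
  unfolding dist_q_def vector_scalar_mult_def
  by (rule cINF_greatest) (auto intro: exI[of _ 1])

lemma dist_q_0_right: "dist_q q x 0 = lp_norm q x"
proof (rule antisym)
  show "dist_q q x 0 \<le> lp_norm q x" using dist_q_le[of 1 q x 0] by simp
  show "lp_norm q x \<le> dist_q q x 0" by (rule dist_q_ge) simp
qed

lemma dist2_attained:
  fixes x y :: "'a::{real_normed_field,heine_borel} ^ 'n"
  obtains c where "norm c = 1" "dist2 x y = norm (x - c *s y)"
proof -
  have cont: "continuous_on (sphere 0 1) (\<lambda>c::'a. norm (x - c *s y))"
    unfolding vector_scalar_mult_def by (intro continuous_intros)
  have "(1::'a) \<in> sphere 0 1" by simp
  then obtain c where c: "c \<in> sphere 0 1" "\<forall>d\<in>sphere 0 1. norm (x - c *s y) \<le> norm (x - d *s y)"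
    using continuous_attains_inf[OF compact_sphere _ cont] by auto
  have "norm c = 1" using c(1) by simp
  moreover have "dist2 x y \<le> norm (x - c *s y)"
    using dist_q_le[OF \<open>norm c = 1\<close>, of 2 x y] by (simp add: lp_norm_2_eq_norm)
  moreover have "norm (x - c *s y) \<le> dist2 x y"
    using c(2) by (intro dist_q_ge) (simp add: lp_norm_2_eq_norm)
  ultimately show ?thesis using that by simp
qed

lemma dist2_le_approx:
  fixes x xs u v :: "'a::real_normed_field ^ 'n"
  assumes "norm c = 1"
  shows "dist2 xs x \<le> norm (u - c *s v) + norm (xs - u) + norm (x - v)"
proof -
  have "xs - c *s x = (u - c *s v) + (xs - u) - c *s (x - v)"
    by (simp add: vector_ssub_ldistrib)
  then have "norm (xs - c *s x) \<le> norm ((u - c *s v) + (xs - u)) + norm (c *s (x - v))"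
    by (simp only: norm_triangle_ineq4)
  then show ?thesis
    using dist_q_le[OF assms, of 2 xs x] norm_triangle_ineq[of "u - c *s v" "xs - u"]
    unfolding lp_norm_2_eq_norm norm_scale_unit[OF assms] by linarith
qed

lemma norm_absvec: "norm (absvec a) = norm a"
  unfolding norm_vec_def absvec_def by simp

lemma norm_absvec_diff_le: "norm (absvec a - absvec b) \<le> norm (a - b)"
  unfolding norm_vec_def absvec_def by (intro L2_set_mono) (auto simp: norm_triangle_ineq3)

lemma absvec_0 [simp]: "absvec 0 = 0"
  unfolding absvec_def by (simp add: vec_eq_iff)

section \<open>Best \<open>k\<close>-term approximation and block decomposition\<close>

lemma obtain_max_sum_subset:
  fixes g :: "'i \<Rightarrow> real"
  assumes "finite W" "m \<le> card W"
  obtains B where "B \<subseteq> W" "card B = m"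
    "\<forall>B'. B' \<subseteq> W \<and> card B' = m \<longrightarrow> sum g B' \<le> sum g B"
    "\<forall>i\<in>B. \<forall>j\<in>W - B. g j \<le> g i"
proof -
  define F where "F = {B. B \<subseteq> W \<and> card B = m}"
  have "finite F" unfolding F_def using assms(1) by (auto intro: finite_subset[of _ "Pow W"])
  moreover have "F \<noteq> {}" unfolding F_def using obtain_subset_with_card_n[OF assms(2)] by blast
  ultimately have "Max (sum g ` F) \<in> sum g ` F" by simp
  then obtain B where "B \<in> F" "sum g B = Max (sum g ` F)" by auto
  then have B: "B \<subseteq> W" "card B = m" and B_max: "\<forall>B'\<in>F. sum g B' \<le> sum g B"
    using \<open>finite F\<close> unfolding F_def by auto
  have "g j \<le> g i" if "i \<in> B" "j \<in> W - B" for i j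
  proof (rule ccontr)
    assume "\<not> g j \<le> g i"
    have "finite B" using B(1) assms(1) finite_subset by blast
    define B' where "B' = insert j (B - {i})"
    have "0 < card B" using that \<open>finite B\<close> by (auto simp: card_gt_0_iff)
    then have "B' \<in> F"
      unfolding F_def B'_def using that B \<open>finite B\<close> by (auto simp: card_insert_if)
    moreover have "sum g B' = sum g B - g i + g j"
      unfolding B'_def using that \<open>finite B\<close> by (simp add: sum_diff1)
    ultimately show False using B_max \<open>\<not> g j \<le> g i\<close> by fastforce
  qed
  then show ?thesis using that B B_max unfolding F_def by blast
qed

lemma obtain_superset_with_card:
  fixes N :: "'n::finite set"
  assumes "card N \<le> k" "k \<le> CARD('n)"
  obtains Z where "N \<subseteq> Z" "card Z = k"
proof -
  have "k - card N \<le> card (- N)"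
    using assms card_Diff_subset[of N UNIV] by (simp add: Compl_eq_Diff_UNIV)
  then obtain Y where "Y \<subseteq> - N" "card Y = k - card N"
    by (meson obtain_subset_with_card_n)
  moreover have "N \<inter> Y = {}" using \<open>Y \<subseteq> - N\<close> by blast
  ultimately have "N \<subseteq> N \<union> Y" "card (N \<union> Y) = k"
    using assms(1) by (auto simp: card_Un_disjoint)
  then show ?thesis using that by blast
qed

lemma lp_sum_compl_le_sigma_k:
  fixes x :: "'a::real_normed_field ^ 'n"
  assumes "0 < p" "card S = k" "k \<le> CARD('n)"
    and S_max: "\<forall>B. card B = k \<longrightarrow> lp_sum p x B \<le> lp_sum p x S"
  shows "lp_sum p x (- S) powr (1/p) \<le> sigma_k k p x"
  unfolding sigma_k_def
proof (rule cINF_greatest)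
  have "(0 :: 'a ^ 'n) \<in> sparse_set (real k)" by (simp add: sparse_set_def l0_norm_def)
  then show "sparse_set (real k) \<noteq> ({} :: ('a ^ 'n) set)" by blast
next
  fix z :: "'a ^ 'n"
  assume "z \<in> sparse_set (real k)"
  then have "card {i. z $ i \<noteq> 0} \<le> k" unfolding sparse_set_def l0_norm_def by simp
  then obtain Z where Z: "{i. z $ i \<noteq> 0} \<subseteq> Z" "card Z = k"
    using obtain_superset_with_card assms(3) by blast
  show "lp_sum p x (- S) powr (1/p) \<le> dist_q p x z"
  proof (rule dist_q_ge)
    fix c :: 'a
    assume "norm c = 1"
    have "lp_sum p x (- S) \<le> lp_sum p x (- Z)"
      using S_max Z(2) lp_sum_UNIV_split[of p x S] lp_sum_UNIV_split[of p x Z] by force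
    also have "lp_sum p x (- Z) = lp_sum p (x - c *s z) (- Z)"
    proof -
      have "z $ i = 0" if "i \<notin> Z" for i using Z(1) that by blast
      then show ?thesis unfolding lp_sum_def by (intro sum.cong) simp_all
    qed
    also have "\<dots> \<le> lp_sum p (x - c *s z) UNIV"
      using lp_sum_UNIV_split[of p "x - c *s z" Z] lp_sum_nonneg[of p "x - c *s z" Z] by linarith
    finally show "lp_sum p x (- S) powr (1/p) \<le> lp_norm p (x - c *s z)"
      unfolding lp_norm_eq_lp_sum using assms(1) by (intro powr_mono2) (auto simp: lp_sum_nonneg)
  qed
qed

lemma norm_vec_restrict_le_lp_sum:
  fixes w :: "'a::real_normed_field ^ 'n"
  assumes "0 < p" "card B = t" "0 < t" "card B' \<le> t"
    and dominated: "\<forall>i\<in>B. \<forall>j\<in>B'. norm (w $ j) \<le> norm (w $ i)"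
  shows "norm (vec_restrict B' w) \<le> real t powr (-(1/p - 1/2)) * lp_sum p w B powr (1/p)"
proof -
  define \<mu> where "\<mu> = (lp_sum p w B / real t) powr (1/p)"
  have entry: "norm (w $ j) \<le> \<mu>" if "j \<in> B'" for j
  proof -
    have "(\<Sum>i\<in>B. norm (w $ j) powr p) \<le> lp_sum p w B"
      unfolding lp_sum_def using dominated that assms(1) by (intro sum_mono powr_mono2) auto
    then have "norm (w $ j) powr p \<le> lp_sum p w B / real t"
      using assms(2,3) by (simp add: field_simps)
    then have "(norm (w $ j) powr p) powr (1/p) \<le> \<mu>"
      unfolding \<mu>_def using assms(1) by (intro powr_mono2) auto
    then show ?thesis using assms(1) by (simp add: powr_powr)
  qed
  have "norm (vec_restrict B' w) \<le> sqrt (real (card B')) * \<mu>"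
    using entry by (intro norm_vec_restrict_le) (auto simp: \<mu>_def)
  also have "\<dots> \<le> sqrt (real t) * \<mu>"
    using assms(4) by (intro mult_right_mono) (auto simp: \<mu>_def)
  also have "\<dots> = (real t powr (1/2) / real t powr (1/p)) * lp_sum p w B powr (1/p)"
    unfolding \<mu>_def by (simp add: powr_divide lp_sum_nonneg powr_half_sqrt)
  also have "real t powr (1/2) / real t powr (1/p) = real t powr (-(1/p - 1/2))"
    by (simp add: powr_diff[symmetric])
  finally show ?thesis .
qed

text \<open>Greedy block decomposition of the tail: the part of \<open>w\<close> on \<open>W\<close> outside its \<open>t\<close> largest
  entries splits into blocks of size \<open>t\<close>, each dominated in \<open>\<ell>\<^sub>2\<close> by the \<open>\<ell>\<^sub>p\<close>-mass of the previous one.\<close>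
lemma exists_head_tail_bound:
  fixes w :: "'a::real_normed_field ^ 'n" and G :: "'a ^ 'n \<Rightarrow> real"
  assumes p: "0 < p" "p \<le> 1" and t: "1 \<le> t" and K: "0 \<le> K"
    and G_subadd: "\<And>a b. G (a + b) \<le> G a + G b"
    and G_sparse: "\<And>z. l0_norm z \<le> t \<Longrightarrow> G z \<le> K * norm z"
  shows "\<exists>B \<subseteq> W. card B \<le> t \<and>
    G (vec_restrict (W - B) w) \<le> K * real t powr (-(1/p - 1/2)) * lp_sum p w W powr (1/p)"
proof (induction "card W" arbitrary: W rule: less_induct)
  case less
  define \<tau> where "\<tau> = K * real t powr (-(1/p - 1/2))"
  have "0 \<le> \<tau>" using K by (simp add: \<tau>_def)
  show ?case
  proof (cases "card W \<le> t")
    case True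
    have "vec_restrict (W - W) w = 0" by (simp add: vec_eq_iff)
    moreover have "G 0 \<le> 0" using G_sparse[of 0] by (simp add: l0_norm_def)
    moreover have "0 \<le> \<tau> * lp_sum p w W powr (1/p)" using \<open>0 \<le> \<tau>\<close> by simp
    ultimately have "G (vec_restrict (W - W) w) \<le> \<tau> * lp_sum p w W powr (1/p)" by simp
    then show ?thesis using True unfolding \<tau>_def by blast
  next
    case False
    then have "t \<le> card W" by simp
    then obtain B where B: "B \<subseteq> W" "card B = t" "\<forall>i\<in>B. \<forall>j\<in>W - B. norm (w $ j) \<le> norm (w $ i)"
      using obtain_max_sum_subset[OF finite, of t W "\<lambda>i. norm (w $ i)"] by blast
    have "card (W - B) < card W" using B t False by (simp add: card_Diff_subset)
    then obtain B' where B': "B' \<subseteq> W - B" "card B' \<le> t"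
      and IH: "G (vec_restrict (W - B - B') w) \<le> \<tau> * lp_sum p w (W - B) powr (1/p)"
      using less unfolding \<tau>_def by blast
    have "norm (vec_restrict B' w) \<le> real t powr (-(1/p - 1/2)) * lp_sum p w B powr (1/p)"
      using B B' t p by (intro norm_vec_restrict_le_lp_sum) auto
    then have "K * norm (vec_restrict B' w) \<le> \<tau> * lp_sum p w B powr (1/p)"
      unfolding \<tau>_def using K by (simp add: mult_left_mono mult.assoc)
    then have head: "G (vec_restrict B' w) \<le> \<tau> * lp_sum p w B powr (1/p)"
      using G_sparse[of "vec_restrict B' w"] l0_norm_vec_restrict_le[of B' w] B'(2) by linarith
    have "vec_restrict (W - B) w = vec_restrict B' w + vec_restrict (W - B - B') w"
      using B'(1) vec_restrict_Un[of B' "W - B - B'" w] by (simp add: sup.absorb2)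
    then have "G (vec_restrict (W - B) w) \<le> G (vec_restrict B' w) + G (vec_restrict (W - B - B') w)"
      using G_subadd by simp
    also have "\<dots> \<le> \<tau> * (lp_sum p w B powr (1/p) + lp_sum p w (W - B) powr (1/p))"
      using head IH by (simp add: distrib_left)
    also have "\<dots> \<le> \<tau> * (lp_sum p w B + lp_sum p w (W - B)) powr (1/p)"
      using p \<open>0 \<le> \<tau>\<close> by (intro mult_left_mono add_powr_le_powr_add) (auto simp: lp_sum_nonneg)
    also have "lp_sum p w B + lp_sum p w (W - B) = lp_sum p w W"
      using B(1) lp_sum_Un_disjoint[of B "W - B" p w] by (simp add: Un_absorb1)
    finally show ?thesis using B unfolding \<tau>_def by blast
  qed
qed

section \<open>Phaseless bi-Lipschitz matrices and the decoder\<close>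

lemma phaseless_bilip_norm_le:
  assumes "phaseless_bilip A X L U" "z \<in> X" "0 \<in> X"
  shows "norm (A *v z) \<le> U * norm z"
  using assms unfolding phaseless_bilip_def
  by (force simp: norm_absvec dist_q_0_right lp_norm_2_eq_norm)

lemma phaseless_bilip_L_le_U:
  fixes A :: "'a::real_normed_field ^ 'n ^ 'm"
  assumes "phaseless_bilip A (sparse_set s) L U" "1 \<le> s"
  shows "L \<le> U"
proof -
  define z :: "'a ^ 'n" where "z = vec_restrict {undefined} (\<chi> j. 1)"
  have "(norm z)\<^sup>2 = 1" unfolding z_def norm_vec_restrict_power2 by simp
  then have "dist2 z 0 = 1"
    using norm_ge_zero[of z] by (auto simp: dist_q_0_right lp_norm_2_eq_norm power2_eq_1_iff)
  have "l0_norm z \<le> 1" using l0_norm_vec_restrict_le[of "{undefined}"] unfolding z_def by simp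
  then have "z \<in> sparse_set s" "0 \<in> sparse_set s"
    using assms(2) by (auto simp: sparse_set_def l0_norm_def)
  then have "L * dist2 z 0 \<le> U * dist2 z 0"
    using assms(1) unfolding phaseless_bilip_def by (meson order.trans)
  then show ?thesis using \<open>dist2 z 0 = 1\<close> by simp
qed

lemma phaseless_bilip_dist2_le:
  assumes "phaseless_bilip A X L U" "u \<in> X" "v \<in> X"
  shows "L * dist2 u v \<le>
    norm (A *v (w - u)) + norm (absvec (A *v w) - absvec (A *v x)) + norm (A *v (x - v))"
proof -
  have "L * dist2 u v \<le> norm (absvec (A *v u) - absvec (A *v v))"
    using assms unfolding phaseless_bilip_def by blast
  also have "\<dots> \<le> norm (A *v (w - u)) + norm (absvec (A *v w) - absvec (A *v x)) + norm (A *v (x - v))"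
  proof (intro norm_diff_triangle_le order.refl)
    show "norm (absvec (A *v u) - absvec (A *v w)) \<le> norm (A *v (w - u))"
      using norm_absvec_diff_le[of "A *v u" "A *v w"]
      by (simp add: matrix_vector_mult_diff_distrib norm_minus_commute)
    show "norm (absvec (A *v x) - absvec (A *v v)) \<le> norm (A *v (x - v))"
      using norm_absvec_diff_le[of "A *v x" "A *v v"] by (simp add: matrix_vector_mult_diff_distrib)
  qed simp
  finally show ?thesis .
qed

lemma Delta_absvec_diff_le:
  assumes "norm e \<le> eta" "xs \<in> Delta A p eta (absvec (A *v x) + e)"
  shows "norm (absvec (A *v xs) - absvec (A *v x)) \<le> 2 * eta"
proof -
  have "norm (absvec (A *v xs) - (absvec (A *v x) + e)) \<le> eta"
    using assms(2) unfolding Delta_def by blast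
  then show ?thesis using assms(1) norm_triangle_ineq[of "absvec (A *v xs) - (absvec (A *v x) + e)" e]
    by (simp add: algebra_simps)
qed

lemma Delta_lp_sum_le:
  assumes "0 < p" "norm e \<le> eta" "xs \<in> Delta A p eta (absvec (A *v x) + e)"
  shows "lp_sum p xs UNIV \<le> lp_sum p x UNIV"
proof -
  have "lp_norm p xs \<le> lp_norm p x"
    using assms(2,3) unfolding Delta_def by simp
  then have "(lp_sum p xs UNIV powr (1/p)) powr p \<le> (lp_sum p x UNIV powr (1/p)) powr p"
    unfolding lp_norm_eq_lp_sum using assms(1) by (rule_tac powr_mono2) auto
  then show ?thesis
    using assms(1) lp_sum_nonneg[of p xs UNIV] lp_sum_nonneg[of p x UNIV] by (simp add: powr_powr)
qed

lemma lp_sum_compl_le_cone: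
  assumes "0 < p" "p \<le> 1" "lp_sum p xs UNIV \<le> lp_sum p x UNIV" "norm c = 1"
  shows "lp_sum p xs (- S) \<le> lp_sum p (xs - c *s x) S + lp_sum p x (- S)"
proof -
  have "lp_sum p x S = lp_sum p (xs - (xs - c *s x)) S"
    using lp_sum_scale[OF assms(4), of p x S] by simp
  also have "\<dots> \<le> lp_sum p xs S + lp_sum p (xs - c *s x) S"
    using assms(1,2) by (rule lp_sum_diff_le)
  finally show ?thesis
    using assms(3) lp_sum_UNIV_split[of p xs S] lp_sum_UNIV_split[of p x S] by linarith
qed

lemma lp_sum_cone_bounds:
  assumes p: "0 < p" "p \<le> 1" and "lp_sum p xs UNIV \<le> lp_sum p x UNIV" "norm c = 1"
    and agree: "\<And>i. i \<in> S \<Longrightarrow> (xs - c *s x) $ i = y $ i"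
  defines "\<delta> \<equiv> real (card S) powr (1/p - 1/2) * norm y"
  shows "lp_sum p (xs - c *s x) S \<le> \<delta> powr p"
    and "lp_sum p xs (- S) \<le> \<delta> powr p + lp_sum p x (- S)"
    and "lp_sum p xs (- S) powr (1/p) \<le> 2 powr (1/p - 1) * (\<delta> + lp_sum p x (- S) powr (1/p))"
proof -
  show head: "lp_sum p (xs - c *s x) S \<le> \<delta> powr p"
    unfolding \<delta>_def using p agree by (intro lp_sum_le_card_powr_norm) auto
  then show tail: "lp_sum p xs (- S) \<le> \<delta> powr p + lp_sum p x (- S)"
    using lp_sum_compl_le_cone[OF p assms(3,4), of S] by linarith
  have "0 \<le> \<delta>" by (simp add: \<delta>_def)
  have "lp_sum p xs (- S) powr (1/p) \<le> (\<delta> powr p + lp_sum p x (- S)) powr (1/p)"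
    using tail p by (intro powr_mono2) (auto simp: lp_sum_nonneg)
  also have "\<dots> \<le> 2 powr (1/p - 1) * ((\<delta> powr p) powr (1/p) + lp_sum p x (- S) powr (1/p))"
    using p by (intro powr_add_le_two_powr) (auto simp: lp_sum_nonneg)
  finally show "lp_sum p xs (- S) powr (1/p) \<le> 2 powr (1/p - 1) * (\<delta> + lp_sum p x (- S) powr (1/p))"
    using p \<open>0 \<le> \<delta>\<close> by (simp add: powr_powr)
qed

locale recovery_constants =
  fixes p r L U :: real
  assumes p_pos: "0 < p" and p_le_1: "p \<le> 1" and r_pos: "0 < r"
    and L_pos: "0 < L" and L_le_U: "L \<le> U" and den_pos: "0 < den L U r p"
begin

lemma U_pos: "0 < U"
  using L_pos L_le_U by simp

lemma one_le_two_powr: "1 \<le> (2::real) powr (1/p - 1)"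
  using p_pos p_le_1 by (intro ge_one_powr_ge_zero) auto

lemma half_r_powr_eq: "(r/2) powr (-(1/p - 1/2)) = (2/r) powr (1/p - 1/2)"
  using r_pos by (simp add: powr_minus powr_divide field_simps)

lemma contraction: "2 powr (1/p - 1) * (2/r) powr (1/p - 1/2) < 1"
proof -
  have "U * (2 powr (1/p - 1) * (2/r) powr (1/p - 1/2)) < U * 1"
    using den_pos L_le_U unfolding den_def by (simp add: mult.assoc)
  then show ?thesis using U_pos by simp
qed

lemma two_lt_r: "2 < r"
proof (rule ccontr)
  assume "\<not> 2 < r"
  then have "1 \<le> (2/r) powr (1/p - 1/2)"
    using r_pos p_pos p_le_1 by (intro ge_one_powr_ge_zero) (auto simp: field_simps)
  then have "1 * 1 \<le> 2 powr (1/p - 1) * (2/r) powr (1/p - 1/2)"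
    using one_le_two_powr by (intro mult_mono) auto
  then show False using contraction by simp
qed

lemma contraction_add_le:
  "2 powr (1/p - 1) * (2/r) powr (1/p - 1/2) + r powr (-(1/p - 1/2))
    \<le> 2 powr (1/p - 1) * r powr (-(1/p - 1/2)) + 1"
proof -
  have "1 * r powr (-(1/p - 1/2)) \<le> 2 powr (1/p - 1) * r powr (-(1/p - 1/2))"
    using one_le_two_powr by (intro mult_right_mono) auto
  then show ?thesis using contraction by simp
qed

lemma Ct2_pos: "0 < Ct2 L U r p"
  unfolding Ct2_def using den_pos U_pos by (simp add: add_nonneg_pos)

lemma Dt2_pos: "0 < Dt2 L U r p"
  unfolding Dt2_def using den_pos by simp

lemma Ct2_powr_le_Ct1: "Ct2 L U r p powr p \<le> Ct1 L U r p"
proof -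
  have "1 \<le> (2 + r) powr (1 - p/2)"
    using r_pos p_le_1 by (intro ge_one_powr_ge_zero) auto
  then show ?thesis unfolding Ct1_def by (simp add: mult_le_cancel_right1)
qed

lemma Dt2_powr_le_Dt1: "2 * Dt2 L U r p powr p \<le> Dt1 L U r p"
proof -
  have "(2::real) = 4 powr (1/2)" by (simp add: powr_half_sqrt)
  also have "\<dots> \<le> 4 powr (1 - p/2)" using p_le_1 by (intro powr_mono) auto
  also have "\<dots> \<le> (2 + r) powr (1 - p/2)" using two_lt_r p_le_1 by (intro powr_mono2) auto
  finally show ?thesis unfolding Dt1_def by (intro mult_right_mono) auto
qed

lemma constants_pos: "0 < C1 L U r p" "0 < D1 L U r p" "0 < C2 L U r p" "0 < D2 L U r p"
proof -
  have "0 < Ct1 L U r p" "0 < Dt1 L U r p"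
    unfolding Ct1_def Dt1_def using Ct2_pos Dt2_pos r_pos by simp_all
  then show "0 < C1 L U r p" "0 < D1 L U r p"
    unfolding C1_def D1_def by simp_all
  show "0 < C2 L U r p" "0 < D2 L U r p"
    unfolding C2_def D2_def using Ct2_pos Dt2_pos
    by (simp_all add: add_pos_nonneg add_nonneg_pos)
qed

text \<open>With \<open>a = 2\<^bsup>1/p - 1\<^esup>\<close> and \<open>\<rho> = (2/r)\<^bsup>1/p - 1/2\<^esup>\<close> the hypotheses bound \<open>L D\<close> by \<open>U a \<rho> D\<close> plus
  known terms; this can be solved for \<open>D\<close> because \<open>L - U a \<rho> = den L U r p > 0\<close>.\<close>
lemma head_dist_le_constants:
  assumes tube: "L * D \<le> U * ((r/2) powr (-(1/p - 1/2)) * P) + 2 * eta + U * (r powr (-(1/p - 1/2)) * \<sigma>)"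
    and cone: "P \<le> 2 powr (1/p - 1) * (D + \<sigma>)" and "0 \<le> \<sigma>"
  shows "D \<le> Ct2 L U r p * \<sigma> + Dt2 L U r p * eta"
proof -
  define a where "a = (2::real) powr (1/p - 1)"
  define \<rho> where "\<rho> = (2/r) powr (1/p - 1/2)"
  define \<rho>' where "\<rho>' = r powr (-(1/p - 1/2))"
  have "U * (\<rho> * P) \<le> U * (\<rho> * (a * (D + \<sigma>)))"
    using cone U_pos unfolding a_def \<rho>_def by (intro mult_left_mono) auto
  then have "L * D \<le> U * (\<rho> * (a * (D + \<sigma>))) + 2 * eta + U * (\<rho>' * \<sigma>)"
    using tube unfolding half_r_powr_eq \<rho>_def \<rho>'_def by linarith
  then have "den L U r p * D \<le> U * (a * \<rho> + \<rho>') * \<sigma> + 2 * eta"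
    unfolding den_def a_def \<rho>_def by (simp add: algebra_simps)
  also have "\<dots> \<le> U * (a * \<rho>' + 1) * \<sigma> + 2 * eta"
  proof -
    have "a * \<rho> + \<rho>' \<le> a * \<rho>' + 1"
      using contraction_add_le unfolding a_def \<rho>_def \<rho>'_def .
    then show ?thesis using U_pos \<open>0 \<le> \<sigma>\<close> by (intro add_right_mono mult_right_mono mult_left_mono) auto
  qed
  finally show ?thesis
    using den_pos unfolding Ct2_def Dt2_def a_def \<rho>'_def by (simp add: field_simps)
qed

lemma dist2_le_constants:
  assumes "E \<le> D + (r/2) powr (-(1/p - 1/2)) * P + r powr (-(1/p - 1/2)) * \<sigma>"
    and "P \<le> 2 powr (1/p - 1) * (D + \<sigma>)" "D \<le> Ct2 L U r p * \<sigma> + Dt2 L U r p * eta" "0 \<le> \<sigma>"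
  shows "E \<le> C2 L U r p * \<sigma> + D2 L U r p * eta"
proof -
  define a where "a = (2::real) powr (1/p - 1)"
  define \<rho> where "\<rho> = (r/2) powr (-(1/p - 1/2))"
  define \<rho>' where "\<rho>' = r powr (-(1/p - 1/2))"
  have "0 \<le> \<rho>" by (simp add: \<rho>_def)
  have "\<rho> * P \<le> \<rho> * (a * (D + \<sigma>))"
    using assms(2) \<open>0 \<le> \<rho>\<close> unfolding a_def by (rule mult_left_mono)
  then have "E \<le> D + \<rho> * (a * (D + \<sigma>)) + \<rho>' * \<sigma>"
    using assms(1) unfolding \<rho>_def \<rho>'_def by linarith
  also have "\<dots> = (1 + a * \<rho>) * D + (a * \<rho> + \<rho>') * \<sigma>" by (simp add: algebra_simps)
  also have "\<dots> \<le> (1 + a * \<rho>) * (Ct2 L U r p * \<sigma> + Dt2 L U r p * eta) + (a * \<rho>' + 1) * \<sigma>"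
  proof (rule add_mono)
    show "(1 + a * \<rho>) * D \<le> (1 + a * \<rho>) * (Ct2 L U r p * \<sigma> + Dt2 L U r p * eta)"
      using assms(3) one_le_two_powr \<open>0 \<le> \<rho>\<close> unfolding a_def by (intro mult_left_mono) auto
    have "a * \<rho> + \<rho>' \<le> a * \<rho>' + 1"
      using contraction_add_le unfolding a_def \<rho>_def \<rho>'_def half_r_powr_eq .
    then show "(a * \<rho> + \<rho>') * \<sigma> \<le> (a * \<rho>' + 1) * \<sigma>" using assms(4) by (rule mult_right_mono)
  qed
  also have "\<dots> = C2 L U r p * \<sigma> + D2 L U r p * eta"
    unfolding C2_def D2_def a_def \<rho>_def \<rho>'_def by (simp add: algebra_simps)
  finally show ?thesis .
qed

lemma lp_mass_le_constants:
  assumes Q: "Q \<le> 2 * (s * D) powr p + 2 * \<sigma> powr p"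
    and D: "D \<le> Ct2 L U r p * (\<sigma> / s) + Dt2 L U r p * eta"
    and "0 < s" "0 \<le> \<sigma>" "0 \<le> eta" "0 \<le> D"
  shows "Q \<le> (2 * Ct1 L U r p + 2) * \<sigma> powr p + Dt1 L U r p * (s * eta) powr p"
proof -
  have "s * D \<le> Ct2 L U r p * \<sigma> + Dt2 L U r p * (s * eta)"
    using mult_left_mono[OF D, of s] \<open>0 < s\<close> by (simp add: algebra_simps)
  then have "(s * D) powr p \<le> (Ct2 L U r p * \<sigma> + Dt2 L U r p * (s * eta)) powr p"
    using assms p_pos by (intro powr_mono2) auto
  also have "\<dots> \<le> (Ct2 L U r p * \<sigma>) powr p + (Dt2 L U r p * (s * eta)) powr p"
    using assms p_pos p_le_1 Ct2_pos Dt2_pos by (intro powr_add_le_add_powr) auto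
  also have "\<dots> = Ct2 L U r p powr p * \<sigma> powr p + Dt2 L U r p powr p * (s * eta) powr p"
    by (simp add: powr_mult)
  finally have "Q \<le> 2 * (Ct2 L U r p powr p * \<sigma> powr p) + 2 * Dt2 L U r p powr p * (s * eta) powr p
      + 2 * \<sigma> powr p"
    using Q by (simp add: algebra_simps)
  also have "\<dots> \<le> 2 * (Ct1 L U r p * \<sigma> powr p) + Dt1 L U r p * (s * eta) powr p + 2 * \<sigma> powr p"
  proof -
    have "2 * (Ct2 L U r p powr p * \<sigma> powr p) \<le> 2 * (Ct1 L U r p * \<sigma> powr p)"
      using Ct2_powr_le_Ct1 by (simp add: mult_right_mono)
    moreover have "2 * Dt2 L U r p powr p * (s * eta) powr p \<le> Dt1 L U r p * (s * eta) powr p"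
      using Dt2_powr_le_Dt1 by (simp add: mult_right_mono)
    ultimately show ?thesis by linarith
  qed
  finally show ?thesis by (simp add: algebra_simps)
qed

lemma dist_p_le_constants:
  assumes "Q \<le> 2 * (s * D) powr p + 2 * \<sigma> powr p"
    and "D \<le> Ct2 L U r p * (\<sigma> / s) + Dt2 L U r p * eta"
    and "0 < s" "0 \<le> \<sigma>" "0 \<le> eta" "0 \<le> D" "0 \<le> Q"
  shows "Q powr (1/p) \<le> C1 L U r p * \<sigma> + D1 L U r p * s * eta"
proof -
  define X where "X = (2 * Ct1 L U r p + 2) * \<sigma> powr p"
  define Y where "Y = Dt1 L U r p * (s * eta) powr p"
  have "Q \<le> X + Y" unfolding X_def Y_def using assms(1-6) by (rule lp_mass_le_constants)
  then have "Q powr (1/p) \<le> (X + Y) powr (1/p)"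
    using \<open>0 \<le> Q\<close> p_pos by (intro powr_mono2) auto
  also have "\<dots> \<le> 2 powr (1/p - 1) * (X powr (1/p) + Y powr (1/p))"
  proof (rule powr_add_le_two_powr)
    show "0 \<le> X" "0 \<le> Y"
      unfolding X_def Y_def Ct1_def Dt1_def using Ct2_pos Dt2_pos by simp_all
  qed (use p_pos p_le_1 in simp)
  also have "X powr (1/p) = (2 * Ct1 L U r p + 2) powr (1/p) * \<sigma>"
    using assms p_pos unfolding X_def by (simp add: powr_mult powr_powr)
  also have "Y powr (1/p) = Dt1 L U r p powr (1/p) * (s * eta)"
    using assms p_pos unfolding Y_def by (simp add: powr_mult powr_powr)
  also have "2 powr (1/p - 1) * ((2 * Ct1 L U r p + 2) powr (1/p) * \<sigma> + Dt1 L U r p powr (1/p) * (s * eta))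
      = C1 L U r p * \<sigma> + D1 L U r p * s * eta"
    unfolding C1_def D1_def by (simp add: algebra_simps)
  finally show ?thesis .
qed

end

locale phaseless_recovery = recovery_constants p r L U
  for p r L U :: real +
  fixes A :: "'a::{real_normed_field,heine_borel} ^ 'n ^ 'm" and k :: nat
  assumes k_pos: "1 \<le> k" and k_le_card: "k \<le> CARD('n)"
    and bilip: "phaseless_bilip A (sparse_set ((r + 4) * real k)) L U"
begin

lemma sparse_norm_le: "real (l0_norm z) \<le> (r + 4) * real k \<Longrightarrow> norm (A *v z) \<le> U * norm z"
  using phaseless_bilip_norm_le[OF bilip] r_pos by (simp add: sparse_set_def l0_norm_def)

text \<open>Bounding \<open>max (\<parallel>A z\<parallel> / U) \<parallel>z\<parallel>\<close> block by block controls both norms of the tail with the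
  same decomposition.\<close>
lemma obtain_sparse_tail:
  assumes "1 \<le> t" "real t \<le> (r + 4) * real k"
  obtains B where "B \<subseteq> W" "card B \<le> t"
    "norm (vec_restrict (W - B) w) \<le> real t powr (-(1/p - 1/2)) * lp_sum p w W powr (1/p)"
    "norm (A *v vec_restrict (W - B) w) \<le> U * (real t powr (-(1/p - 1/2)) * lp_sum p w W powr (1/p))"
proof -
  define G where "G z = max (norm (A *v z) / U) (norm z)" for z
  have "G (a + b) \<le> G a + G b" for a b
  proof -
    have "norm (A *v (a + b)) / U \<le> norm (A *v a) / U + norm (A *v b) / U"
      using U_pos norm_triangle_ineq[of "A *v a" "A *v b"]
      by (simp add: matrix_vector_right_distrib add_divide_distrib[symmetric] divide_right_mono)
    then show ?thesis unfolding G_def using norm_triangle_ineq[of a b] by linarith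
  qed
  moreover have "G z \<le> 1 * norm z" if "l0_norm z \<le> t" for z
    using sparse_norm_le[of z] that assms(2) U_pos unfolding G_def by (simp add: divide_le_eq mult.commute)
  ultimately obtain B where B: "B \<subseteq> W" "card B \<le> t"
    "G (vec_restrict (W - B) w) \<le> 1 * real t powr (-(1/p - 1/2)) * lp_sum p w W powr (1/p)"
    using exists_head_tail_bound[OF p_pos p_le_1 assms(1), of 1 G W w] by auto
  have G_ge: "norm z \<le> G z" "norm (A *v z) \<le> U * G z" for z
  proof -
    have "norm (A *v z) / U \<le> G z" "norm z \<le> G z" unfolding G_def by auto
    then show "norm z \<le> G z" "norm (A *v z) \<le> U * G z"
      using U_pos by (simp_all add: pos_divide_le_eq mult.commute)
  qed
  show ?thesis
  proof (rule that[OF B(1,2)])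
    show "norm (vec_restrict (W - B) w) \<le> real t powr (-(1/p - 1/2)) * lp_sum p w W powr (1/p)"
      using order_trans[OF G_ge(1) B(3)] by simp
    show "norm (A *v vec_restrict (W - B) w) \<le> U * (real t powr (-(1/p - 1/2)) * lp_sum p w W powr (1/p))"
      using order_trans[OF G_ge(2) mult_left_mono[OF B(3)]] U_pos by simp
  qed
qed

lemma obtain_block_size:
  assumes "0 < c" "c \<le> r"
  obtains t where "1 \<le> t" "c * real k \<le> real t" "real (k + t) \<le> (r + 4) * real k"
proof -
  define t where "t = nat \<lceil>c * real k\<rceil>"
  have "0 < c * real k" using assms(1) k_pos by simp
  then have t: "1 \<le> t" "c * real k \<le> real t" "real t \<le> c * real k + 1"
    unfolding t_def using ceiling_correct[of "c * real k"] by (auto simp: le_nat_iff)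
  have "c * real k \<le> r * real k" using assms(2) by (simp add: mult_right_mono)
  moreover have "(r + 4) * real k = r * real k + 4 * real k" by (simp add: algebra_simps)
  moreover have "1 \<le> real k" using k_pos by simp
  ultimately have "real (k + t) \<le> (r + 4) * real k" using t(3) unfolding of_nat_add by linarith
  with t show ?thesis by (intro that) auto
qed

lemma obtain_sparse_head:
  fixes w :: "'a ^ 'n"
  assumes "0 < c" "c \<le> r" "card S = k"
  defines "\<epsilon> \<equiv> c powr (-(1/p - 1/2)) * (lp_sum p w (- S) powr (1/p) / real k powr (1/p - 1/2))"
  obtains u where "u \<in> sparse_set ((r + 4) * real k)" "\<And>i. i \<in> S \<Longrightarrow> u $ i = w $ i"
    "norm (w - u) \<le> \<epsilon>" "norm (A *v (w - u)) \<le> U * \<epsilon>"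
proof -
  obtain t where "1 \<le> t" and t_ge: "c * real k \<le> real t" and "real (k + t) \<le> (r + 4) * real k"
    using obtain_block_size[OF assms(1,2)] .
  have "0 < c * real k" using assms(1) k_pos by simp
  from \<open>real (k + t) \<le> (r + 4) * real k\<close> obtain B where B: "B \<subseteq> - S" "card B \<le> t"
    "norm (vec_restrict (- S - B) w) \<le> real t powr (-(1/p - 1/2)) * lp_sum p w (- S) powr (1/p)"
    "norm (A *v vec_restrict (- S - B) w) \<le> U * (real t powr (-(1/p - 1/2)) * lp_sum p w (- S) powr (1/p))"
    using obtain_sparse_tail[OF \<open>1 \<le> t\<close>, of "- S" w] by auto
  define u where "u = vec_restrict (S \<union> B) w"
  have tail: "w - u = vec_restrict (- S - B) w"
    unfolding u_def diff_vec_restrict by (simp add: Diff_eq)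
  have bound: "real t powr (-(1/p - 1/2)) * lp_sum p w (- S) powr (1/p) \<le> \<epsilon>"
  proof -
    have "real t powr (-(1/p - 1/2)) \<le> (c * real k) powr (-(1/p - 1/2))"
      using t_ge \<open>0 < c * real k\<close> p_le_1 p_pos by (intro powr_mono2') (auto simp: field_simps)
    also have "\<dots> = c powr (-(1/p - 1/2)) * real k powr (-(1/p - 1/2))"
      by (rule powr_mult)
    finally have "real t powr (-(1/p - 1/2)) \<le> c powr (-(1/p - 1/2)) / real k powr (1/p - 1/2)"
      by (simp only: powr_minus_divide) simp
    then show ?thesis
      unfolding \<epsilon>_def using mult_right_mono[of _ _ "lp_sum p w (- S) powr (1/p)"] by force
  qed
  have "l0_norm u \<le> k + t"
    unfolding u_def using l0_norm_vec_restrict_le[of "S \<union> B" w] card_Un_le[of S B] B(2) assms(3)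
    by linarith
  then have "u \<in> sparse_set ((r + 4) * real k)"
    using \<open>real (k + t) \<le> (r + 4) * real k\<close> unfolding sparse_set_def by simp
  moreover have "u $ i = w $ i" if "i \<in> S" for i using that by (simp add: u_def)
  moreover have "norm (w - u) \<le> \<epsilon>" using B(3) bound unfolding tail by linarith
  moreover have "norm (A *v (w - u)) \<le> U * \<epsilon>"
    using B(4) mult_left_mono[OF bound, of U] U_pos unfolding tail by linarith
  ultimately show ?thesis by (rule that)
qed

lemma obtain_sparse_pair:
  fixes x xs :: "'a ^ 'n" and S :: "'n set"
  assumes "norm e \<le> eta" "xs \<in> Delta A p eta (absvec (A *v x) + e)" "card S = k"
  defines "s \<equiv> real k powr (1/p - 1/2)"
    and "P \<equiv> lp_sum p xs (- S) powr (1/p)" and "\<sigma> \<equiv> lp_sum p x (- S) powr (1/p)"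
  obtains u v c where "norm c = 1" "\<And>i. i \<in> S \<Longrightarrow> (xs - c *s x) $ i = (u - c *s v) $ i"
    "norm (xs - u) \<le> (r/2) powr (-(1/p - 1/2)) * (P / s)"
    "norm (x - v) \<le> r powr (-(1/p - 1/2)) * (\<sigma> / s)"
    "norm (u - c *s v) \<le> Ct2 L U r p * (\<sigma> / s) + Dt2 L U r p * eta"
proof -
  have "0 < s" using k_pos by (simp add: s_def)
  obtain u where u: "u \<in> sparse_set ((r + 4) * real k)" "\<And>i. i \<in> S \<Longrightarrow> u $ i = xs $ i"
    "norm (xs - u) \<le> (r/2) powr (-(1/p - 1/2)) * (P / s)"
    "norm (A *v (xs - u)) \<le> U * ((r/2) powr (-(1/p - 1/2)) * (P / s))"
    using obtain_sparse_head[of "r/2" S xs] r_pos assms(3) unfolding P_def s_def by auto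
  obtain v where v: "v \<in> sparse_set ((r + 4) * real k)" "\<And>i. i \<in> S \<Longrightarrow> v $ i = x $ i"
    "norm (x - v) \<le> r powr (-(1/p - 1/2)) * (\<sigma> / s)"
    "norm (A *v (x - v)) \<le> U * (r powr (-(1/p - 1/2)) * (\<sigma> / s))"
    using obtain_sparse_head[of r S x] r_pos assms(3) unfolding \<sigma>_def s_def by auto
  obtain c where c: "norm c = 1" "dist2 u v = norm (u - c *s v)" by (rule dist2_attained)
  define D where "D = norm (u - c *s v)"
  have agree: "(xs - c *s x) $ i = (u - c *s v) $ i" if "i \<in> S" for i
    using u(2) v(2) that by simp
  have "P \<le> 2 powr (1/p - 1) * (s * D + \<sigma>)"
    using lp_sum_cone_bounds(3)[where S = S, OF p_pos p_le_1 Delta_lp_sum_le[OF p_pos assms(1,2)] c(1) agree]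
    unfolding P_def \<sigma>_def s_def D_def assms(3) .
  have "D \<le> Ct2 L U r p * (\<sigma> / s) + Dt2 L U r p * eta"
  proof (rule head_dist_le_constants)
    show "L * D \<le> U * ((r/2) powr (-(1/p - 1/2)) * (P / s)) + 2 * eta
        + U * (r powr (-(1/p - 1/2)) * (\<sigma> / s))"
      using phaseless_bilip_dist2_le[OF bilip u(1) v(1), of xs x] Delta_absvec_diff_le[OF assms(1,2)]
        u(4) v(4) unfolding D_def c(2)[symmetric] by linarith
    show "P / s \<le> 2 powr (1/p - 1) * (D + \<sigma> / s)"
      using \<open>P \<le> 2 powr (1/p - 1) * (s * D + \<sigma>)\<close> \<open>0 < s\<close> by (simp add: field_simps)
    show "0 \<le> \<sigma> / s" using \<open>0 < s\<close> by (simp add: \<sigma>_def)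
  qed
  then show ?thesis using that[OF c(1) agree u(3) v(3)] unfolding D_def by blast
qed

lemma recovery_bounds_for_support:
  fixes x xs :: "'a ^ 'n" and S :: "'n set"
  assumes "0 \<le> eta" "norm e \<le> eta" "xs \<in> Delta A p eta (absvec (A *v x) + e)" "card S = k"
  defines "s \<equiv> real k powr (1/p - 1/2)" and "\<sigma> \<equiv> lp_sum p x (- S) powr (1/p)"
  shows "dist_q p xs x \<le> C1 L U r p * \<sigma> + D1 L U r p * s * eta"
    and "dist2 xs x \<le> C2 L U r p * (\<sigma> / s) + D2 L U r p * eta"
proof -
  have "0 < s" "0 \<le> \<sigma>" using k_pos by (simp_all add: s_def \<sigma>_def)
  define P where "P = lp_sum p xs (- S) powr (1/p)"
  obtain u v c where c: "norm c = 1" and agree: "\<And>i. i \<in> S \<Longrightarrow> (xs - c *s x) $ i = (u - c *s v) $ i"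
    and u: "norm (xs - u) \<le> (r/2) powr (-(1/p - 1/2)) * (P / s)"
    and v: "norm (x - v) \<le> r powr (-(1/p - 1/2)) * (\<sigma> / s)"
    and D_le: "norm (u - c *s v) \<le> Ct2 L U r p * (\<sigma> / s) + Dt2 L U r p * eta"
    using obtain_sparse_pair[OF assms(2-4)] unfolding s_def \<sigma>_def P_def by blast
  define D where "D = norm (u - c *s v)"
  define d where "d = xs - c *s x"
  note cone = lp_sum_cone_bounds[where S = S, OF p_pos p_le_1 Delta_lp_sum_le[OF p_pos assms(2,3)] c agree,
      unfolded assms(4), folded s_def D_def d_def]
  show "dist2 xs x \<le> C2 L U r p * (\<sigma> / s) + D2 L U r p * eta"
  proof (rule dist2_le_constants[OF _ _ D_le[folded D_def]])
    show "dist2 xs x \<le> D + (r/2) powr (-(1/p - 1/2)) * (P / s) + r powr (-(1/p - 1/2)) * (\<sigma> / s)"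
      using dist2_le_approx[OF c, of xs x u v] u v unfolding D_def by linarith
    show "P / s \<le> 2 powr (1/p - 1) * (D + \<sigma> / s)"
      using cone(3) \<open>0 < s\<close> unfolding P_def \<sigma>_def by (simp add: field_simps)
  qed (use \<open>0 < s\<close> \<open>0 \<le> \<sigma>\<close> in simp)
  show "dist_q p xs x \<le> C1 L U r p * \<sigma> + D1 L U r p * s * eta"
  proof -
    have "\<sigma> powr p = lp_sum p x (- S)"
      using p_pos lp_sum_nonneg[of p x "- S"] by (simp add: \<sigma>_def powr_powr)
    then have "lp_sum p d (- S) \<le> lp_sum p xs (- S) + \<sigma> powr p"
      using lp_sum_diff_le[OF p_pos p_le_1, of xs "c *s x" "- S"] lp_sum_scale[OF c, of p x "- S"]
      unfolding d_def by linarith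
    then have "lp_sum p d UNIV \<le> 2 * (s * D) powr p + 2 * \<sigma> powr p"
      using lp_sum_UNIV_split[of p d S] cone(1,2) \<open>\<sigma> powr p = lp_sum p x (- S)\<close> by linarith
    then have "lp_sum p d UNIV powr (1/p) \<le> C1 L U r p * \<sigma> + D1 L U r p * s * eta"
      using D_le[folded D_def] \<open>0 < s\<close> \<open>0 \<le> \<sigma>\<close> assms(1) norm_ge_zero lp_sum_nonneg
      unfolding D_def by (rule dist_p_le_constants)
    then show ?thesis using dist_q_le[OF c, of p xs x] unfolding lp_norm_eq_lp_sum d_def by linarith
  qed
qed

lemma recovery_bounds:
  assumes "0 \<le> eta" "norm e \<le> eta" "xs \<in> Delta A p eta (absvec (A *v x) + e)"
  shows "dist_q p xs x \<le> C1 L U r p * sigma_k k p x + D1 L U r p * real k powr (1/p - 1/2) * eta \<and>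
    dist2 xs x \<le> C2 L U r p * sigma_k k p x / real k powr (1/p - 1/2) + D2 L U r p * eta"
proof -
  have "k \<le> card (UNIV :: 'n set)" using k_le_card by simp
  then obtain S where S: "S \<subseteq> UNIV" "card S = k"
    "\<forall>B. B \<subseteq> UNIV \<and> card B = k \<longrightarrow> lp_sum p x B \<le> lp_sum p x S"
    "\<forall>i\<in>S. \<forall>j\<in>UNIV - S. norm (x $ j) powr p \<le> norm (x $ i) powr p"
    unfolding lp_sum_def by (rule obtain_max_sum_subset[OF finite])
  define s where "s = real k powr (1/p - 1/2)"
  define \<sigma> where "\<sigma> = lp_sum p x (- S) powr (1/p)"
  have "0 < s" using k_pos by (simp add: s_def)
  have "\<sigma> \<le> sigma_k k p x"
    unfolding \<sigma>_def using lp_sum_compl_le_sigma_k[OF p_pos S(2) k_le_card] S(3) by blast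
  then have "C1 L U r p * \<sigma> \<le> C1 L U r p * sigma_k k p x"
    and "C2 L U r p * (\<sigma> / s) \<le> C2 L U r p * sigma_k k p x / s"
    using constants_pos \<open>0 < s\<close> by (simp_all add: divide_right_mono)
  then show ?thesis
    using recovery_bounds_for_support[OF assms S(2)] unfolding s_def \<sigma>_def by linarith
qed

end

lemma phaseless_recovery_guarantee:
  fixes A :: "'a::{real_normed_field,heine_borel} ^ 'n ^ 'm" and p r L U :: real and k :: nat
  assumes "0 < p" "p \<le> 1" "1 \<le> k" "k \<le> CARD('n)" "0 < r" "0 < den L U r p"
    and bilip: "phaseless_bilip A (sparse_set ((r + 4) * real k)) L U"
  shows "0 < C1 L U r p \<and> 0 < D1 L U r p \<and> 0 < C2 L U r p \<and> 0 < D2 L U r p \<and>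
    (\<forall>x eta e xs. 0 \<le> eta \<longrightarrow> norm e \<le> eta \<longrightarrow> xs \<in> Delta A p eta (absvec (A *v x) + e) \<longrightarrow>
       dist_q p xs x \<le> C1 L U r p * sigma_k k p x + D1 L U r p * real k powr (1/p - 1/2) * eta \<and>
       dist2 xs x \<le> C2 L U r p * sigma_k k p x / real k powr (1/p - 1/2) + D2 L U r p * eta)"
proof -
  have "1 * 1 \<le> (r + 4) * real k" using assms(3,5) by (intro mult_mono) auto
  interpret phaseless_recovery p r L U A k
  proof unfold_locales
    show "0 < L" using bilip by (simp add: phaseless_bilip_def)
    show "L \<le> U" using phaseless_bilip_L_le_U[OF bilip] \<open>1 * 1 \<le> (r + 4) * real k\<close> by simp
  qed (use assms in auto)
  show ?thesis using constants_pos recovery_bounds by simp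
qed

theorem theorem2p2:
  fixes p r L U :: real and k :: nat
  assumes hp: "0 < p" "p \<le> 1"
    and hk: "1 \<le> k" "k \<le> CARD('n)"
    and hr: "0 < r"
    and hLU: "0 < L" "0 < U"
    and hcond: "L - U * 2 powr (1/p - 1) * (2 / r) powr (1/p - 1/2) > 0"
  shows
   "(\<forall>(A :: real ^ 'n ^ 'm). phaseless_bilip A (sparse_set ((r + 4) * real k)) L U \<longrightarrow>
      0 < C1 L U r p \<and> 0 < D1 L U r p \<and> 0 < C2 L U r p \<and> 0 < D2 L U r p \<and>
      (\<forall>x eta e xs. 0 \<le> eta \<longrightarrow> norm e \<le> eta \<longrightarrow> xs \<in> Delta A p eta (absvec (A *v x) + e) \<longrightarrow>
         dist_q p xs x \<le> C1 L U r p * sigma_k k p x + D1 L U r p * real k powr (1/p - 1/2) * eta \<and>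
         dist2 xs x \<le> C2 L U r p * sigma_k k p x / real k powr (1/p - 1/2) + D2 L U r p * eta))
    \<and>
    (\<forall>(A :: complex ^ 'n ^ 'm). phaseless_bilip A (sparse_set ((r + 4) * real k)) L U \<longrightarrow>
      0 < C1 L U r p \<and> 0 < D1 L U r p \<and> 0 < C2 L U r p \<and> 0 < D2 L U r p \<and>
      (\<forall>x eta e xs. 0 \<le> eta \<longrightarrow> norm e \<le> eta \<longrightarrow> xs \<in> Delta A p eta (absvec (A *v x) + e) \<longrightarrow>
         dist_q p xs x \<le> C1 L U r p * sigma_k k p x + D1 L U r p * real k powr (1/p - 1/2) * eta \<and>
         dist2 xs x \<le> C2 L U r p * sigma_k k p x / real k powr (1/p - 1/2) + D2 L U r p * eta))"
proof -
  have den: "0 < den L U r p" using hcond by (simp add: den_def)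
  show ?thesis by (simp add: phaseless_recovery_guarantee[OF hp hk hr den])
qed

end
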